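(* Let $T$ be an $spo$-tableau and $x_1,x_2\in B_0$ with $x_1\le x_2$. Suppose the insertion of $x_1$ into $T$ causes a cancellation and the insertion of $x_2$ into $U=T\leftarrow x_1$ causes a cancellation. Then the box removed from the shape of $U$ in forming $U\leftarrow x_2$ lies in a different column from the box removed from the shape of $T$ in forming $U$.
   Context: Fix positive integers $m,n$. Let $B_0=\{1,\bar1,2,\bar2,\dots,m,\bar m\}$, $B_1=\{1^\circ,\dots,n^\circ\}$, $B=B_0\cup B_1$, totally ordered by $1<\bar1<2<\bar2<\cdots<m<\bar m<1^\circ<\cdots<n^\circ$. Rows are numbered from the top starting at 1, columns from the left. An $spo$-tableau of shape $\lambda$ is a filling of the Young diagram of $\lambda$ with entries of $B$ such that (i) the boxes containing entries of $B_0$ form a Young diagram $\sigma\subseteq\lambda$, and this part is weakly increasing along rows, strictly increasing down columns, and every entry in row $i$ is $\ge i$; (ii) the entries of $B_1$ (filling $\lambda/\sigma$) are strictly increasing along rows and weakly increasing down columns. $spo$-insertion: a forward jeu de taquin slide on an empty box with right neighbour $a$ and lower neighbour $b$ moves $a$ left into the empty box if $a<b$ or ($a=b\in B_1$), and moves $b$ up into the empty box if $b<a$ or ($a=b\in B_0$); if only one neighbour exists it moves in; slides are repeated until the empty box has no right or lower neighbour, and then that box is deleted. Inserting $z\in B_0$ into row $r$: if no entry of the row exceeds $z$, append $z$ in a new box at the end of the row; otherwise let $w$ be the least entry of the row with $w>z$; if $z=r$ (unbarred) and $w=\bar r$, delete $\bar r$ leaving an empty box (a cancellation); otherwise replace $w$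 by $z$, displacing $w$. Inserting $z\in B_1$ into column $c$: if no entry of the column exceeds $z$, append $z$ in a new box at the bottom; otherwise replace the least entry $w>z$ of the column by $z$, displacing $w$. To insert $x\in B_0$ into $T$ (result $T\leftarrow x$) start by inserting $x$ into row 1; to insert $x\in B_1$ (result $x\rightarrow T$) start by inserting $x$ into column 1. Whenever an entry $w$ is displaced from a box in row $r$, column $c$: if $w\in B_0$ insert it into row $r+1$; if $w\in B_1$ insert it into column $c+1$. The process ends when an entry is placed in a new box, or when a cancellation occurs, in which case the empty box is moved to an outer corner by forward slides and deleted. If no cancellation occurs the result has exactly one new box; if a cancellation occurs the result has exactly one box fewer. *)

theory Defs
  imports Main "HOL-Library.Product_Lexorder"
begin

text \<open>B0 i False is the unbarred letter i, B0 i True is the barred letter (bar i),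
  B1 j is the circled letter (j circ).\<close>
datatype ent = B0 nat bool | B1 nat

fun ent_key :: "ent \<Rightarrow> nat \<times> nat" where
  "ent_key (B0 i b) = (0, 2 * i + (if b then 1 else 0))"
| "ent_key (B1 j) = (1, j)"

lemma ent_key_inj: "inj ent_key"
proof (rule injI)
  fix x y assume "ent_key x = ent_key y"
  then show "x = y"
    by (cases x; cases y) (auto split: if_splits, presburger+)
qed

instantiation ent :: linorder
begin
definition less_eq_ent :: "ent \<Rightarrow> ent \<Rightarrow> bool" where
  "less_eq_ent x y \<longleftrightarrow> ent_key x \<le> ent_key y"
definition less_ent :: "ent \<Rightarrow> ent \<Rightarrow> bool" where
  "less_ent x y \<longleftrightarrow> ent_key x < ent_key y"
instance
proof
  fix x y z :: ent
  show "(x < y) = (x \<le> y \<and> \<not> y \<le> x)" by (auto simp: less_eq_ent_def less_ent_def)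
  show "x \<le> x" by (simp add: less_eq_ent_def)
  show "x \<le> y \<Longrightarrow> y \<le> z \<Longrightarrow> x \<le> z" by (auto simp: less_eq_ent_def)
  show "x \<le> y \<Longrightarrow> y \<le> x \<Longrightarrow> x = y"
    using ent_key_inj by (auto simp: less_eq_ent_def inj_eq)
  show "x \<le> y \<or> y \<le> x" by (auto simp: less_eq_ent_def)
qed
end

fun is_B0 :: "ent \<Rightarrow> bool" where
  "is_B0 (B0 _ _) = True" | "is_B0 (B1 _) = False"

fun in_B :: "nat \<Rightarrow> nat \<Rightarrow> ent \<Rightarrow> bool" where
  "in_B m n (B0 i b) \<longleftrightarrow> 1 \<le> i \<and> i \<le> m"
| "in_B m n (B1 j) \<longleftrightarrow> 1 \<le> j \<and> j \<le> n"

text \<open>A filling: box (row, column), both 1-indexed, rows numbered from the top.\<close>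
type_synonym tab = "nat \<times> nat \<Rightarrow> ent option"

definition young_diagram :: "(nat \<times> nat) set \<Rightarrow> bool" where
  "young_diagram D \<longleftrightarrow> finite D \<and> (\<forall>(i,j)\<in>D. 1 \<le> i \<and> 1 \<le> j) \<and>
     (\<forall>i j i' j'. (i,j) \<in> D \<and> 1 \<le> i' \<and> i' \<le> i \<and> 1 \<le> j' \<and> j' \<le> j \<longrightarrow> (i',j') \<in> D)"

definition spo_tableau :: "nat \<Rightarrow> nat \<Rightarrow> tab \<Rightarrow> bool" where
  "spo_tableau m n T \<longleftrightarrow>
     young_diagram (dom T) \<and>
     (\<forall>p w. T p = Some w \<longrightarrow> in_B m n w) \<and>
     young_diagram {p. \<exists>w. T p = Some w \<and> is_B0 w} \<and>
     \<comment> \<open>B0 part: weakly increasing along rows, strictly down columns, row-i entries \<ge> i\<close>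
     (\<forall>i j a b. T (i,j) = Some a \<and> T (i,j+1) = Some b \<and> is_B0 a \<and> is_B0 b \<longrightarrow> a \<le> b) \<and>
     (\<forall>i j a b. T (i,j) = Some a \<and> T (i+1,j) = Some b \<and> is_B0 a \<and> is_B0 b \<longrightarrow> a < b) \<and>
     (\<forall>i j a. T (i,j) = Some a \<and> is_B0 a \<longrightarrow> B0 i False \<le> a) \<and>
     \<comment> \<open>B1 part: strictly increasing along rows, weakly down columns\<close>
     (\<forall>i j a b. T (i,j) = Some a \<and> T (i,j+1) = Some b \<and> \<not> is_B0 a \<and> \<not> is_B0 b \<longrightarrow> a < b) \<and>
     (\<forall>i j a b. T (i,j) = Some a \<and> T (i+1,j) = Some b \<and> \<not> is_B0 a \<and> \<not> is_B0 b \<longrightarrow> a \<le> b)"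

text \<open>States: insert an entry into a row / into a column; a hole (empty box)
  being moved by forward slides; finished, with the deleted box (Some p) in
  case a cancellation occurred, or None otherwise.\<close>
datatype ins_state =
    RowIns tab ent nat
  | ColIns tab ent nat
  | Slide tab "nat \<times> nat"
  | Done tab "(nat \<times> nat) option"

definition displace :: "tab \<Rightarrow> ent \<Rightarrow> nat \<Rightarrow> nat \<Rightarrow> ins_state" where
  "displace T w r c = (if is_B0 w then RowIns T w (r+1) else ColIns T w (c+1))"

definition move_into :: "tab \<Rightarrow> nat \<times> nat \<Rightarrow> nat \<times> nat \<Rightarrow> ent \<Rightarrow> ins_state" where
  "move_into T hole q a = Slide (T(hole := Some a, q := None)) q"

fun ins_step :: "ins_state \<Rightarrow> ins_state" where
  "ins_step (RowIns T z r) =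
     (if \<not> (\<exists>c w. T (r,c) = Some w \<and> z < w)
      then Done (T((r, Max ({0} \<union> {c. (r,c) \<in> dom T}) + 1) := Some z)) None
      else (let w = Min {w. \<exists>c. T (r,c) = Some w \<and> z < w};
                c = Min {c. T (r,c) = Some w} in
            if z = B0 r False \<and> w = B0 r True
            then Slide (T((r,c) := None)) (r,c)
            else displace (T((r,c) := Some z)) w r c))"
| "ins_step (ColIns T z c) =
     (if \<not> (\<exists>r w. T (r,c) = Some w \<and> z < w)
      then Done (T((Max ({0} \<union> {r. (r,c) \<in> dom T}) + 1, c) := Some z)) None
      else (let w = Min {w. \<exists>r. T (r,c) = Some w \<and> z < w};
                r = Min {r. T (r,c) = Some w} in
            displace (T((r,c) := Some z)) w r c))"
| "ins_step (Slide T (i,j)) =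
     (case (T (i,j+1), T (i+1,j)) of
        (None, None) \<Rightarrow> Done T (Some (i,j))
      | (Some a, None) \<Rightarrow> move_into T (i,j) (i,j+1) a
      | (None, Some b) \<Rightarrow> move_into T (i,j) (i+1,j) b
      | (Some a, Some b) \<Rightarrow>
          (if a < b \<or> (a = b \<and> \<not> is_B0 a)
           then move_into T (i,j) (i,j+1) a
           else move_into T (i,j) (i+1,j) b))"
| "ins_step (Done T d) = Done T d"

text \<open>spo_row_insert T x U d: the insertion T \<leftarrow> x of x \<in> B0 (starting in row 1)
  terminates with result U; d = Some p iff a cancellation occurred, p being the
  box deleted from the shape of T.\<close>
definition spo_row_insert :: "tab \<Rightarrow> ent \<Rightarrow> tab \<Rightarrow> (nat \<times> nat) option \<Rightarrow> bool" where
  "spo_row_insert T x U d \<longleftrightarrow> (\<exists>k. (ins_step ^^ k) (RowIns T x 1) = Done U d)"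

end

theory Submission
  imports Defs
begin

(* The first insertion bumps x1 = y 1 < y 2 < ... through rows 1, ..., r - 1 and cancels in
   row r; the hole then slides to the deleted box b1, leaving each row k between r and fst b1
   through a column e k that weakly increases with k. In U, y (k + 1) is a lower bound for the
   entries of row k exceeding y k, and row k has no barred k from column e k on.
   Inserting x2 \<ge> x1 into U, the entry bumped out of row k is therefore at least y (k + 1), so
   there is no cancellation above row r, and a cancellation in a row k \<ge> r happens strictly left
   of column e k. The second hole then stays strictly left of the first path: just left of it,
   the entry the first hole pulled up lies to the right, and the slide rule sends the hole down.
   So it is deleted left of column e (fst b1), or below row fst b1, where that column is empty. *)

lemma B0_less_B1: "B0 i b < B1 j"
  by (simp add: less_ent_def less_prod_def)

lemma not_is_B0_if_greater: "\<not> is_B0 z \<Longrightarrow> z < w \<Longrightarrow> \<not> is_B0 w"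
  by (cases z; cases w) (auto simp: less_ent_def less_prod_def)

lemma eq_barred_if_between: "B0 k False < y \<Longrightarrow> y \<le> B0 k True \<Longrightarrow> y = B0 k True"
  by (cases y) (auto simp: less_eq_ent_def less_ent_def less_eq_prod_def less_prod_def split: if_splits)

lemma bumped_ge_next_row:
  assumes "B0 k False \<le> z" "z < w" "is_B0 w" "\<not> (z = B0 k False \<and> w = B0 k True)"
  shows "B0 (Suc k) False \<le> w"
  using assms
  by (cases z; cases w) (auto simp: less_eq_ent_def less_ent_def less_eq_prod_def less_prod_def
      split: if_splits, presburger+)

lemma barred_less_if_ge_next_row: "B0 (Suc i) False \<le> a \<or> \<not> is_B0 a \<Longrightarrow> B0 i True < a"
  by (cases a) (auto simp: less_eq_ent_def less_ent_def less_eq_prod_def less_prod_def split: if_splits)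

lemma spo_tableau_box_pos:
  assumes "spo_tableau m n T" "T (i,j) = Some a"
  shows "1 \<le> i" "1 \<le> j"
proof -
  have "young_diagram (dom T)" "(i,j) \<in> dom T"
    using assms by (auto simp: spo_tableau_def)
  then show "1 \<le> i" "1 \<le> j" unfolding young_diagram_def by blast+
qed

lemma spo_tableau_box_exists:
  assumes "spo_tableau m n T" "T (i,j) = Some a" "1 \<le> i'" "i' \<le> i" "1 \<le> j'" "j' \<le> j"
  shows "\<exists>a'. T (i',j') = Some a'"
proof -
  have "young_diagram (dom T)" "(i,j) \<in> dom T"
    using assms(1,2) by (auto simp: spo_tableau_def)
  then have "(i',j') \<in> dom T"
    using assms(3-6) unfolding young_diagram_def by blast
  then show ?thesis by auto
qed

lemma finite_dom_spo_tableau: "spo_tableau m n T \<Longrightarrow> finite (dom T)"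
  unfolding spo_tableau_def young_diagram_def by (elim conjE)

lemma spo_tableau_B0_left:
  assumes "spo_tableau m n T" "T (i, Suc j) = Some b" "is_B0 b" "1 \<le> j"
  shows "\<exists>a. T (i,j) = Some a \<and> is_B0 a"
proof -
  let ?D = "{p. \<exists>w. T p = Some w \<and> is_B0 w}"
  have "young_diagram ?D" using assms(1) by (simp add: spo_tableau_def)
  then have "\<forall>i j i' j'. (i,j) \<in> ?D \<and> 1 \<le> i' \<and> i' \<le> i \<and> 1 \<le> j' \<and> j' \<le> j \<longrightarrow> (i',j') \<in> ?D"
    unfolding young_diagram_def by (elim conjE)
  moreover have "(i, Suc j) \<in> ?D" using assms(2,3) by simp
  moreover have "1 \<le> i" using spo_tableau_box_pos[OF assms(1,2)] by simp
  ultimately have "(i,j) \<in> ?D" using assms(4) by (meson le_SucI order_refl)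
  then show ?thesis by auto
qed

lemma spo_tableau_row_step:
  assumes spo: "spo_tableau m n T" and ab: "T (i,j) = Some a" "T (i, Suc j) = Some b"
  shows "a \<le> b \<and> (a = b \<longrightarrow> is_B0 a)"
proof (cases "is_B0 a"; cases "is_B0 b")
  assume "is_B0 a" "is_B0 b"
  then have "a \<le> b" using spo ab unfolding spo_tableau_def Suc_eq_plus1 by blast
  then show ?thesis using \<open>is_B0 a\<close> by auto
next
  assume "is_B0 a" "\<not> is_B0 b"
  then show ?thesis by (cases a; cases b) (auto intro: less_imp_le B0_less_B1)
next
  assume "\<not> is_B0 a" "is_B0 b"
  moreover have "1 \<le> j" using spo_tableau_box_pos[OF spo ab(1)] by simp
  ultimately show ?thesis using spo_tableau_B0_left[OF spo ab(2)] ab(1) by auto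
next
  assume "\<not> is_B0 a" "\<not> is_B0 b"
  then have "a < b" using spo ab unfolding spo_tableau_def Suc_eq_plus1 by blast
  then show ?thesis by auto
qed

lemma spo_tableau_row_mono:
  assumes spo: "spo_tableau m n T" and a: "T (i,j) = Some a" and "T (i,j') = Some b" "j \<le> j'"
  shows "a \<le> b"
proof -
  have "T (i, j + d) = Some b \<Longrightarrow> a \<le> b" for d b
  proof (induction d arbitrary: b)
    case 0
    then show ?case using a by simp
  next
    case (Suc d)
    obtain c where c: "T (i, j + d) = Some c"
      using spo_tableau_box_exists[OF spo Suc.prems, of i "j + d"] spo_tableau_box_pos[OF spo a]
      by auto
    have "a \<le> c" using Suc.IH[OF c] .
    also have "c \<le> b" using spo_tableau_row_step[OF spo c] Suc.prems by simp
    finally show ?case .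
  qed
  from this[of "j' - j"] show ?thesis using assms(3,4) by simp
qed

lemma spo_tableau_barred_less:
  assumes "spo_tableau m n T" "T (Suc i, j) = Some a"
  shows "B0 i True < a"
proof -
  have "is_B0 a \<longrightarrow> B0 (Suc i) False \<le> a"
    using assms unfolding spo_tableau_def by blast
  then show ?thesis by (intro barred_less_if_ge_next_row) auto
qed

lemma run_Done: "(ins_step ^^ k) (Done W d) = Done W d"
  by (induction k) auto

lemma run_Suc: "(ins_step ^^ Suc k) s = (ins_step ^^ k) (ins_step s)"
  by (simp add: funpow_Suc_right del: funpow.simps)

fun state_tab :: "ins_state \<Rightarrow> tab" where
  "state_tab (RowIns W z r) = W"
| "state_tab (ColIns W z c) = W"
| "state_tab (Slide W h) = W"
| "state_tab (Done W d) = W"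

lemma finite_dom_ins_step:
  "finite (dom (state_tab s)) \<Longrightarrow> finite (dom (state_tab (ins_step s)))"
  by (induction s rule: ins_step.induct)
     (auto simp: Let_def displace_def move_into_def split: option.split)

lemma finite_dom_run:
  "finite (dom (state_tab s)) \<Longrightarrow> finite (dom (state_tab ((ins_step ^^ k) s)))"
  by (induction k) (auto intro: finite_dom_ins_step)

lemma ins_step_RowIns_bump:
  assumes fin: "finite (dom W)" and ex: "\<exists>c w. W (r,c) = Some w \<and> z < w"
  obtains w c where "W (r,c) = Some w" "z < w"
    "\<And>c' w'. W (r,c') = Some w' \<Longrightarrow> z < w' \<Longrightarrow> w \<le> w'"
    "ins_step (RowIns W z r) =
       (if z = B0 r False \<and> w = B0 r True then Slide (W((r,c) := None)) (r,c)
        else displace (W((r,c) := Some z)) w r c)"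
proof -
  define S where "S = {w. \<exists>c. W (r,c) = Some w \<and> z < w}"
  have "finite S"
    unfolding S_def by (rule finite_subset[OF _ finite_ran[OF fin]]) (auto simp: ran_def)
  moreover have "S \<noteq> {}" using ex unfolding S_def by auto
  ultimately have wS: "Min S \<in> S" and w_least: "\<And>w'. w' \<in> S \<Longrightarrow> Min S \<le> w'" by auto
  define C where "C = {c. W (r,c) = Some (Min S)}"
  have "finite C"
    unfolding C_def by (rule finite_subset[OF _ finite_imageI[OF fin, of snd]]) force
  moreover have "C \<noteq> {}" using wS unfolding S_def C_def by auto
  ultimately have "Min C \<in> C" by simp
  then have "W (r, Min C) = Some (Min S)" unfolding C_def by simp
  moreover have "ins_step (RowIns W z r) =
       (if z = B0 r False \<and> Min S = B0 r True then Slide (W((r, Min C) := None)) (r, Min C)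
        else displace (W((r, Min C) := Some z)) (Min S) r (Min C))"
    using ex by (simp only: ins_step.simps Let_def S_def C_def) simp
  ultimately show ?thesis
    using that wS w_least unfolding S_def by blast
qed

lemma ins_step_ColIns_bump:
  assumes fin: "finite (dom W)" and ex: "\<exists>r w. W (r,c) = Some w \<and> z < w"
  obtains w r where "W (r,c) = Some w" "z < w"
    "ins_step (ColIns W z c) = displace (W((r,c) := Some z)) w r c"
proof -
  define S where "S = {w. \<exists>r. W (r,c) = Some w \<and> z < w}"
  have "finite S"
    unfolding S_def by (rule finite_subset[OF _ finite_ran[OF fin]]) (auto simp: ran_def)
  moreover have "S \<noteq> {}" using ex unfolding S_def by auto
  ultimately have wS: "Min S \<in> S" by simp
  define R where "R = {r. W (r,c) = Some (Min S)}"
  have "finite R"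
    unfolding R_def by (rule finite_subset[OF _ finite_imageI[OF fin, of fst]]) force
  moreover have "R \<noteq> {}" using wS unfolding S_def R_def by auto
  ultimately have "Min R \<in> R" by simp
  then have "W (Min R, c) = Some (Min S)" unfolding R_def by simp
  moreover have "ins_step (ColIns W z c) = displace (W((Min R, c) := Some z)) (Min S) (Min R) c"
    using ex by (simp only: ins_step.simps Let_def S_def R_def) simp
  ultimately show ?thesis
    using that wS unfolding S_def by blast
qed

lemma run_ColIns_no_cancellation:
  "(ins_step ^^ k) (ColIns W z c) = Done U d \<Longrightarrow> \<not> is_B0 z \<Longrightarrow> finite (dom W) \<Longrightarrow> d = None"
proof (induction k arbitrary: W z c)
  case (Suc k)
  show ?case
  proof (cases "\<exists>r w. W (r,c) = Some w \<and> z < w")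
    case False
    then show ?thesis using Suc.prems(1) by (simp add: run_Suc run_Done del: funpow.simps)
  next
    case True
    then obtain w r where "W (r,c) = Some w" "z < w"
      and step: "ins_step (ColIns W z c) = displace (W((r,c) := Some z)) w r c"
      using ins_step_ColIns_bump[OF Suc.prems(3)] by blast
    then have "\<not> is_B0 w" using not_is_B0_if_greater Suc.prems(2) by blast
    then have "(ins_step ^^ k) (ColIns (W((r,c) := Some z)) w (c+1)) = Done U d"
      using Suc.prems(1) step by (simp add: run_Suc displace_def del: funpow.simps)
    moreover have "finite (dom (W((r,c) := Some z)))" using Suc.prems(3) by simp
    ultimately show ?thesis using Suc.IH \<open>\<not> is_B0 w\<close> by blast
  qed
qed simp

lemma run_RowIns_cancellation_cases:
  assumes run: "(ins_step ^^ Suc k) (RowIns W z r) = Done U (Some b)" and fin: "finite (dom W)"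
  obtains (cancel) c where "W (r,c) = Some (B0 r True)" "z = B0 r False"
      "(ins_step ^^ k) (Slide (W((r,c) := None)) (r,c)) = Done U (Some b)"
  | (bump) w c where "W (r,c) = Some w" "z < w" "\<And>c' w'. W (r,c') = Some w' \<Longrightarrow> z < w' \<Longrightarrow> w \<le> w'"
      "is_B0 w" "\<not> (z = B0 r False \<and> w = B0 r True)"
      "(ins_step ^^ k) (RowIns (W((r,c) := Some z)) w (Suc r)) = Done U (Some b)"
proof (cases "\<exists>c w. W (r,c) = Some w \<and> z < w")
  case False
  then obtain U' where step: "ins_step (RowIns W z r) = Done U' None" by simp
  have "(ins_step ^^ k) (Done U' None) = Done U (Some b)"
    using run unfolding run_Suc step .
  then show ?thesis unfolding run_Done by simp
next
  case True
  obtain w c where wc: "W (r,c) = Some w" "z < w"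
      "\<And>c' w'. W (r,c') = Some w' \<Longrightarrow> z < w' \<Longrightarrow> w \<le> w'"
    and step: "ins_step (RowIns W z r) =
       (if z = B0 r False \<and> w = B0 r True then Slide (W((r,c) := None)) (r,c)
        else displace (W((r,c) := Some z)) w r c)"
    using ins_step_RowIns_bump[OF fin True] by metis
  have run': "(ins_step ^^ k) (if z = B0 r False \<and> w = B0 r True then Slide (W((r,c) := None)) (r,c)
        else displace (W((r,c) := Some z)) w r c) = Done U (Some b)"
    using run by (simp only: run_Suc step)
  consider "z = B0 r False \<and> w = B0 r True" | "\<not> (z = B0 r False \<and> w = B0 r True)" "is_B0 w"
    | "\<not> is_B0 w" "\<not> (z = B0 r False \<and> w = B0 r True)"
    by blast
  then show ?thesis
  proof cases
    case 1
    then show ?thesis using cancel wc(1) run' by simp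
  next
    case 2
    have "(ins_step ^^ k) (RowIns (W((r,c) := Some z)) w (r + 1)) = Done U (Some b)"
      using run' unfolding if_not_P[OF 2(1)] displace_def if_P[OF 2(2)] .
    then show ?thesis using wc 2 by (intro bump[of c w]) auto
  next
    case 3
    have "(ins_step ^^ k) (ColIns (W((r,c) := Some z)) w (c + 1)) = Done U (Some b)"
      using run' unfolding if_not_P[OF 3(2)] displace_def if_not_P[OF 3(1)] .
    moreover note \<open>\<not> is_B0 w\<close>
    moreover have "finite (dom (W((r,c) := Some z)))" using fin by simp
    ultimately have "Some b = None" by (rule run_ColIns_no_cancellation)
    then show ?thesis by simp
  qed
qed

lemma ins_step_Slide_cases:
  obtains (stop) "W (i, Suc j) = None" "W (Suc i, j) = None"
      "ins_step (Slide W (i,j)) = Done W (Some (i,j))"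
  | (right) a where "W (i, Suc j) = Some a"
      "\<forall>b. W (Suc i, j) = Some b \<longrightarrow> a < b \<or> (a = b \<and> \<not> is_B0 a)"
      "ins_step (Slide W (i,j)) = Slide (W((i,j) := Some a, (i, Suc j) := None)) (i, Suc j)"
  | (down) b where "W (Suc i, j) = Some b"
      "\<forall>a. W (i, Suc j) = Some a \<longrightarrow> \<not> (a < b \<or> (a = b \<and> \<not> is_B0 a))"
      "ins_step (Slide W (i,j)) = Slide (W((i,j) := Some b, (Suc i, j) := None)) (Suc i, j)"
proof (cases "W (i, Suc j)")
  case None
  then show ?thesis
    using stop down by (cases "W (Suc i, j)") (simp_all add: move_into_def)
next
  case (Some a)
  show ?thesis
  proof (cases "W (Suc i, j)")
    case None
    then show ?thesis using Some right[of a] by (simp add: move_into_def)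
  next
    case (Some b)
    then show ?thesis using \<open>W (i, Suc j) = Some a\<close> right[of a] down[of b]
      by (cases "a < b \<or> (a = b \<and> \<not> is_B0 a)") (auto simp: move_into_def)
  qed
qed

lemma run_Slide_cases:
  assumes run: "(ins_step ^^ Suc k) (Slide W (i,j)) = Done U d"
  obtains (stop) "W (i, Suc j) = None" "W (Suc i, j) = None" "U = W" "d = Some (i,j)"
  | (right) a where "W (i, Suc j) = Some a"
      "\<forall>b. W (Suc i, j) = Some b \<longrightarrow> a < b \<or> (a = b \<and> \<not> is_B0 a)"
      "(ins_step ^^ k) (Slide (W((i,j) := Some a, (i, Suc j) := None)) (i, Suc j)) = Done U d"
  | (down) b where "W (Suc i, j) = Some b"
      "\<forall>a. W (i, Suc j) = Some a \<longrightarrow> \<not> (a < b \<or> (a = b \<and> \<not> is_B0 a))"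
      "(ins_step ^^ k) (Slide (W((i,j) := Some b, (Suc i, j) := None)) (Suc i, j)) = Done U d"
proof (cases W i j rule: ins_step_Slide_cases)
  case stop
  then show ?thesis using that(1) run by (simp only: run_Suc run_Done) simp
next
  case (right a)
  then show ?thesis using that(2)[of a] run by (simp only: run_Suc)
next
  case (down b)
  then show ?thesis using that(3)[of b] run by (simp only: run_Suc)
qed

lemma agree_after_move:
  fixes h h' :: "'a :: order"
  assumes agree: "\<forall>p. h < p \<longrightarrow> W p = T p" and "h < h'"
  shows "\<forall>p. h' < p \<longrightarrow> (W(h := x, h' := None)) p = T p"
proof (intro allI impI)
  fix p assume "h' < p"
  then have "h < p" "p \<noteq> h" "p \<noteq> h'" using \<open>h < h'\<close> by auto
  then show "(W(h := x, h' := None)) p = T p" using agree[rule_format, of p] by simp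
qed

lemma agree_before_move:
  fixes h h' :: "'a :: order"
  assumes agree: "\<forall>p. p < h' \<longrightarrow> U p = (W(h := x, h' := None)) p" and "h < h'"
  shows "\<forall>p. p < h \<longrightarrow> U p = W p"
proof (intro allI impI)
  fix p assume "p < h"
  then have "p < h'" "p \<noteq> h" "p \<noteq> h'" using \<open>h < h'\<close> by auto
  then show "U p = W p" using agree[rule_format, of p] by simp
qed

section \<open>The path of the first hole\<close>

lemma spo_tableau_empty_right:
  assumes "spo_tableau m n T" "T (i, Suc j) = None" "Suc j \<le> l"
  shows "T (i,l) = None"
proof (rule ccontr)
  assume "T (i,l) \<noteq> None"
  then obtain a where a: "T (i,l) = Some a" by auto
  then show False
    using spo_tableau_box_exists[OF assms(1) a, of i "Suc j"] spo_tableau_box_pos[OF assms(1) a] assms(2,3)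
    by auto
qed

lemma spo_tableau_empty_below:
  assumes "spo_tableau m n T" "T (Suc i, j) = None" "Suc i \<le> k"
  shows "T (k,j) = None"
proof (rule ccontr)
  assume "T (k,j) \<noteq> None"
  then obtain a where a: "T (k,j) = Some a" by auto
  then show False
    using spo_tableau_box_exists[OF assms(1) a, of "Suc i" j] spo_tableau_box_pos[OF assms(1) a] assms(2,3)
    by auto
qed

lemma spo_tableau_no_barred_right:
  assumes spo: "spo_tableau m n T" and b: "T (Suc i, j) = Some b"
    and le: "\<forall>a. T (i, Suc j) = Some a \<longrightarrow> b \<le> a" and "1 \<le> i" "j < l"
  shows "T (i,l) \<noteq> Some (B0 i True)"
proof
  assume l: "T (i,l) = Some (B0 i True)"
  then obtain a where a: "T (i, Suc j) = Some a"
    using spo_tableau_box_exists[OF spo l, of i "Suc j"] \<open>1 \<le> i\<close> \<open>j < l\<close> by auto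
  have "b \<le> a" using le a by blast
  also have "a \<le> B0 i True" using spo_tableau_row_mono[OF spo a l] \<open>j < l\<close> by simp
  finally show False using spo_tableau_barred_less[OF spo b] by simp
qed

(* The hole enters row r and leaves row k (r \<le> k \<le> R) through column e k; it is deleted at
   (R, e R). At (k, e k - 1) a hole would move down, since the entry at (k, e k) was pulled up
   from below. *)
definition slide_path :: "tab \<Rightarrow> nat \<Rightarrow> nat \<Rightarrow> (nat \<Rightarrow> nat) \<Rightarrow> bool" where
  "slide_path U r R e \<longleftrightarrow> r \<le> R \<and>
     (\<forall>k. r \<le> k \<longrightarrow> k < R \<longrightarrow> e k \<le> e (Suc k)) \<and>
     (\<forall>k l. r \<le> k \<longrightarrow> k \<le> R \<longrightarrow> e k \<le> l \<longrightarrow> U (k,l) \<noteq> Some (B0 k True)) \<and>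
     (\<forall>k j. r \<le> k \<longrightarrow> k < R \<longrightarrow> e k = Suc j \<longrightarrow> 1 \<le> j \<longrightarrow>
        (\<exists>a b. U (k, Suc j) = Some a \<and> U (Suc k, j) = Some b \<and> \<not> (a < b \<or> (a = b \<and> \<not> is_B0 a)))) \<and>
     U (R, e R) = None \<and>
     (\<forall>k. R < k \<longrightarrow> U (k, e R) = None) \<and>
     (\<forall>k. r \<le> k \<longrightarrow> U (k,0) = None)"

lemma slide_path_stop:
  assumes "U (i,j) = None" "\<forall>l>j. U (i,l) = None" "\<forall>k>i. U (k,j) = None" "\<forall>k\<ge>i. U (k,0) = None"
  shows "slide_path U i i (\<lambda>_. j)"
proof -
  have "U (i,l) \<noteq> Some (B0 i True)" if "j \<le> l" for l
    using assms(1,2) that by (cases "l = j") auto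
  then show ?thesis using assms unfolding slide_path_def by auto
qed

lemma slide_path_Suc_row:
  assumes path: "slide_path U (Suc i) R e" and "j \<le> e (Suc i)" "U (i,0) = None"
    and no_bar: "\<forall>l\<ge>j. U (i,l) \<noteq> Some (B0 i True)"
    and down: "\<And>j'. j = Suc j' \<Longrightarrow> 1 \<le> j' \<Longrightarrow>
      \<exists>a b. U (i, Suc j') = Some a \<and> U (Suc i, j') = Some b \<and> \<not> (a < b \<or> (a = b \<and> \<not> is_B0 a))"
  shows "slide_path U i R (e(i := j))"
proof -
  have split: "i \<le> k \<longleftrightarrow> k = i \<or> Suc i \<le> k" for k by auto
  show ?thesis
    using path assms(2,3) no_bar down unfolding slide_path_def split by auto
qed

lemma slide_path_after_down_move:
  assumes spo: "spo_tableau m n T"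
    and agree: "\<forall>p. (i,j) < p \<longrightarrow> W p = T p"
    and b: "W (Suc i, j) = Some b"
    and down: "\<forall>a. W (i, Suc j) = Some a \<longrightarrow> \<not> (a < b \<or> (a = b \<and> \<not> is_B0 a))"
    and before: "\<forall>p. p < (Suc i, j) \<longrightarrow> U p = (W((i,j) := Some b, (Suc i, j) := None)) p"
    and path: "slide_path U (Suc i) R e" "j \<le> e (Suc i)"
    and "1 \<le> i" "1 \<le> j" "W (i,0) = None"
  shows "slide_path U i R (e(i := j))"
proof -
  have WT: "W p = T p" if "(i,j) < p" for p using agree that by blast
  have row_i: "U (i,l) = (W((i,j) := Some b)) (i,l)" for l
    using before by (simp add: less_prod_def)
  have bT: "T (Suc i, j) = Some b" using b WT[of "(Suc i, j)"] by (simp add: less_prod_def)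
  have right_ge: "\<forall>a. T (i, Suc j) = Some a \<longrightarrow> b \<le> a"
    using down WT[of "(i, Suc j)"] by (auto simp: less_prod_def)
  have "\<forall>l\<ge>j. U (i,l) \<noteq> Some (B0 i True)"
    using spo_tableau_barred_less[OF spo bT] spo_tableau_no_barred_right[OF spo bT right_ge]
      \<open>1 \<le> i\<close> WT row_i by (auto simp: le_less less_prod_def)
  moreover have "\<exists>a c. U (i, Suc j') = Some a \<and> U (Suc i, j') = Some c \<and> \<not> (a < c \<or> (a = c \<and> \<not> is_B0 a))"
    if j: "j = Suc j'" "1 \<le> j'" for j'
  proof -
    obtain c where c: "T (Suc i, j') = Some c"
      using spo_tableau_box_exists[OF spo bT, of "Suc i" j'] j by auto
    then have "U (Suc i, j') = Some c"
      using before WT[of "(Suc i, j')"] j by (simp add: less_prod_def)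
    moreover have "c \<le> b \<and> (c = b \<longrightarrow> is_B0 c)"
      using spo_tableau_row_step[OF spo c] bT j by simp
    ultimately show ?thesis using row_i[of j] j by auto
  qed
  ultimately show ?thesis
    using slide_path_Suc_row[OF path] row_i[of 0] \<open>1 \<le> j\<close> \<open>W (i,0) = None\<close> by auto
qed

(* A slide only changes the hole and the box it moves to, which lies after it lexicographically
   and becomes the new hole; so W agrees with T on all boxes after the hole. *)
lemma slide_path_of_run:
  assumes spo: "spo_tableau m n T"
  shows "(ins_step ^^ k) (Slide W (i,j)) = Done U (Some b) \<Longrightarrow> W (i,j) = None \<Longrightarrow>
    \<forall>p. (i,j) < p \<longrightarrow> W p = T p \<Longrightarrow> 1 \<le> i \<Longrightarrow> 1 \<le> j \<Longrightarrow> \<forall>k\<ge>i. W (k,0) = None \<Longrightarrow>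
    \<exists>e. slide_path U i (fst b) e \<and> snd b = e (fst b) \<and> j \<le> e i \<and> (\<forall>p. p < (i,j) \<longrightarrow> U p = W p)"
proof (induction k arbitrary: W i j)
  case (Suc k)
  note hole = Suc.prems(2) and agree = Suc.prems(3) and col0 = Suc.prems(6)
  have WT: "W p = T p" if "(i,j) < p" for p using agree that by blast
  from Suc.prems(1) show ?case
  proof (cases rule: run_Slide_cases)
    case stop
    have "\<forall>l>j. W (i,l) = None"
      using spo_tableau_empty_right[OF spo] stop(1) WT by (simp add: less_prod_def Suc_le_eq)
    moreover have "\<forall>k>i. W (k,j) = None"
      using spo_tableau_empty_below[OF spo] stop(2) WT by (simp add: less_prod_def Suc_le_eq)
    ultimately have "slide_path W i i (\<lambda>_. j)"
      using slide_path_stop hole col0 by blast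
    then show ?thesis using stop by auto
  next
    case (right a)
    let ?W = "W((i,j) := Some a, (i, Suc j) := None)"
    have "(i,j) < (i, Suc j)" by (simp add: less_prod_def)
    from Suc.IH[OF right(3) _ agree_after_move[OF agree this]] Suc.prems(4,5) col0
    obtain e where "slide_path U i (fst b) e" "snd b = e (fst b)" "Suc j \<le> e i"
      and "\<forall>p. p < (i, Suc j) \<longrightarrow> U p = ?W p"
      by auto
    then show ?thesis using agree_before_move \<open>(i,j) < (i, Suc j)\<close> by fastforce
  next
    case (down b')
    let ?W = "W((i,j) := Some b', (Suc i, j) := None)"
    have "(i,j) < (Suc i, j)" by (simp add: less_prod_def)
    from Suc.IH[OF down(3) _ agree_after_move[OF agree this]] Suc.prems(4,5) col0
    obtain e where path: "slide_path U (Suc i) (fst b) e" "snd b = e (fst b)" "j \<le> e (Suc i)"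
      and before: "\<forall>p. p < (Suc i, j) \<longrightarrow> U p = ?W p"
      by auto
    have "slide_path U i (fst b) (e(i := j))"
      using slide_path_after_down_move[OF spo agree down(1,2) before path(1,3)] Suc.prems(4,5) col0
      by simp
    moreover have "i < fst b" using path(1) by (simp add: slide_path_def)
    then have "snd b = (e(i := j)) (fst b)" using path(2) by simp
    ultimately show ?thesis
      using agree_before_move[OF before \<open>(i,j) < (Suc i, j)\<close>] by fastforce
  qed
qed simp

section \<open>The two insertions\<close>

(* Row k of the first insertion: y was inserted and y' bumped out. *)
definition row_bump :: "tab \<Rightarrow> nat \<Rightarrow> ent \<Rightarrow> ent \<Rightarrow> bool" where
  "row_bump U k y y' \<longleftrightarrow> (\<forall>j v. U (k,j) = Some v \<longrightarrow> y < v \<longrightarrow> y' \<le> v) \<and> y < y' \<and>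
     \<not> (y = B0 k False \<and> y' = B0 k True) \<and> B0 k False \<le> y"

lemma row_bump_after_bump:
  assumes row: "\<forall>p. fst p < Suc k \<longrightarrow> U p = (W((k,c) := Some z)) p" and "z < w"
    and least: "\<And>c' w'. W (k,c') = Some w' \<Longrightarrow> z < w' \<Longrightarrow> w \<le> w'"
    and "\<not> (z = B0 k False \<and> w = B0 k True)" "B0 k False \<le> z"
  shows "row_bump U k z w"
proof -
  have "w \<le> v" if "U (k,j) = Some v" "z < v" for j v
    using row[rule_format, of "(k,j)"] that least by (cases "j = c") auto
  then show ?thesis using assms(2,4,5) unfolding row_bump_def by blast
qed

lemma row_bump_not_cancelled:
  assumes "row_bump U k y y'" "y \<le> B0 k False" "U (k,c) = Some (B0 k True)"
  shows False
proof -
  have y: "y = B0 k False" using assms(1,2) unfolding row_bump_def by auto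
  then have "y' \<le> B0 k True" using assms(1,3) unfolding row_bump_def by (simp add: less_ent_def less_prod_def)
  moreover have "B0 k False < y'" using assms(1) y unfolding row_bump_def by simp
  ultimately show False using eq_barred_if_between assms(1) y unfolding row_bump_def by blast
qed

lemma first_insertion_trace:
  assumes spo: "spo_tableau m n T"
  shows "(ins_step ^^ N) (RowIns W z k) = Done U (Some b) \<Longrightarrow> \<forall>p. k \<le> fst p \<longrightarrow> W p = T p \<Longrightarrow>
    B0 k False \<le> z \<Longrightarrow> 1 \<le> k \<Longrightarrow> finite (dom W) \<Longrightarrow>
    \<exists>r ys e. k \<le> r \<and> ys k = z \<and> (\<forall>p. fst p < k \<longrightarrow> U p = W p) \<and>
      (\<forall>k'. k \<le> k' \<longrightarrow> k' < r \<longrightarrow> row_bump U k' (ys k') (ys (Suc k'))) \<and>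
      slide_path U r (fst b) e \<and> snd b = e (fst b)"
proof (induction N arbitrary: W z k)
  case (Suc N)
  have WT: "W p = T p" if "k \<le> fst p" for p using Suc.prems(2) that by blast
  from Suc.prems(1,5) show ?case
  proof (cases rule: run_RowIns_cancellation_cases)
    case (cancel c)
    let ?W = "W((k,c) := None)"
    have "1 \<le> c" using spo_tableau_box_pos[OF spo] cancel(1) WT[of "(k,c)"] by simp
    have "\<forall>p. (k,c) < p \<longrightarrow> ?W p = T p" using WT by (auto simp: less_prod_def)
    moreover have "\<forall>k'\<ge>k. ?W (k',0) = None"
      using WT spo_tableau_box_pos(2)[OF spo] \<open>1 \<le> c\<close> by (metis fst_conv fun_upd_apply not_one_le_zero
          not_None_eq prod.inject)
    ultimately obtain e where "slide_path U k (fst b) e" "snd b = e (fst b)"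
      and "\<forall>p. p < (k,c) \<longrightarrow> U p = ?W p"
      using slide_path_of_run[OF spo cancel(3)] Suc.prems(4) \<open>1 \<le> c\<close> by auto
    moreover have "\<forall>p. fst p < k \<longrightarrow> U p = W p"
      using calculation(3) by (auto simp: less_prod_def)
    ultimately show ?thesis using cancel(2) by (intro exI[of _ k] exI[of _ "\<lambda>_. z"]) auto
  next
    case (bump w c)
    let ?W = "W((k,c) := Some z)"
    have "B0 (Suc k) False \<le> w" using bumped_ge_next_row Suc.prems(3) bump(2,4,5) by blast
    moreover have "\<forall>p. Suc k \<le> fst p \<longrightarrow> ?W p = T p" using WT by auto
    ultimately obtain r ys e where IH: "Suc k \<le> r" "ys (Suc k) = w" "\<forall>p. fst p < Suc k \<longrightarrow> U p = ?W p"
        "\<forall>k'. Suc k \<le> k' \<longrightarrow> k' < r \<longrightarrow> row_bump U k' (ys k') (ys (Suc k'))"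
        "slide_path U r (fst b) e" "snd b = e (fst b)"
      using Suc.IH[OF bump(6)] Suc.prems(5) by fastforce
    have "row_bump U k z w"
      using row_bump_after_bump[OF IH(3) bump(2,3,5) Suc.prems(3)] .
    then have "row_bump U k' ((ys(k := z)) k') ((ys(k := z)) (Suc k'))" if "k \<le> k'" "k' < r" for k'
      using IH(2,4) that by (cases "k' = k") auto
    moreover have "\<forall>p. fst p < k \<longrightarrow> U p = W p" using IH(3) by auto
    ultimately show ?thesis using IH(1,5,6) by (intro exI[of _ r] exI[of _ "ys(k := z)"]) auto
  qed
qed simp

lemma slide_path_mono:
  assumes "slide_path U r R e" "r \<le> k" "k \<le> k'" "k' \<le> R"
  shows "e k \<le> e k'"
  using assms(3,4)
proof (induction k' rule: dec_induct)
  case (step q)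
  then have "e q \<le> e (Suc q)" using assms(1,2) unfolding slide_path_def by simp
  then show ?case using step by simp
qed simp

lemma slide_path_blocks_right:
  assumes path: "slide_path U r R e" and "r \<le> i" "i \<le> R" "e i = Suc j" "1 \<le> j"
    and a: "U (i, Suc j) = Some a"
    and right: "\<forall>b. U (Suc i, j) = Some b \<longrightarrow> a < b \<or> (a = b \<and> \<not> is_B0 a)"
  shows False
proof (cases "i = R")
  case True
  then show False using path a \<open>e i = Suc j\<close> unfolding slide_path_def by simp
next
  case False
  then show False using path assms(2-5) a right unfolding slide_path_def by force
qed

lemma second_slide_avoids_path_end:
  assumes path: "slide_path U r R e"
  shows "(ins_step ^^ N) (Slide W (i,j)) = Done V (Some b) \<Longrightarrow> \<forall>p. (i,j) < p \<longrightarrow> W p = U p \<Longrightarrow>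
    U (i,j) \<noteq> None \<Longrightarrow> r \<le> i \<Longrightarrow> (i \<le> R \<longrightarrow> j < e i) \<Longrightarrow> 1 \<le> j \<Longrightarrow> snd b \<noteq> e R"
proof (induction N arbitrary: W i j)
  case (Suc N)
  have WU: "W p = U p" if "(i,j) < p" for p using Suc.prems(2) that by blast
  from Suc.prems(1) show ?case
  proof (cases rule: run_Slide_cases)
    case stop
    show ?thesis
    proof (cases "i \<le> R")
      case True
      then show ?thesis using stop(4) Suc.prems(4,5) slide_path_mono[OF path, of i R] by simp
    next
      case False
      then show ?thesis using stop(4) Suc.prems(3) path unfolding slide_path_def by auto
    qed
  next
    case (right a)
    have "(i,j) < (i, Suc j)" by (simp add: less_prod_def)
    have Ua: "U (i, Suc j) = Some a" using right(1) WU[of "(i, Suc j)"] by (simp add: less_prod_def)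
    have "\<forall>b. U (Suc i, j) = Some b \<longrightarrow> a < b \<or> (a = b \<and> \<not> is_B0 a)"
      using right(2) WU[of "(Suc i, j)"] by (simp add: less_prod_def)
    then have "i \<le> R \<longrightarrow> Suc j < e i"
      using slide_path_blocks_right[OF path Suc.prems(4) _ _ Suc.prems(6) Ua] Suc.prems(5)
      by (metis Suc_lessI)
    then show ?thesis
      using Suc.IH[OF right(3) agree_after_move[OF Suc.prems(2) \<open>(i,j) < (i, Suc j)\<close>]] Ua Suc.prems(4)
      by simp
  next
    case (down b')
    have "(i,j) < (Suc i, j)" by (simp add: less_prod_def)
    have "U (Suc i, j) = Some b'" using down(1) WU[of "(Suc i, j)"] by (simp add: less_prod_def)
    moreover have "Suc i \<le> R \<longrightarrow> j < e (Suc i)"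
      using slide_path_mono[OF path Suc.prems(4), of "Suc i"] Suc.prems(5) by auto
    ultimately show ?thesis
      using Suc.IH[OF down(3) agree_after_move[OF Suc.prems(2) \<open>(i,j) < (Suc i, j)\<close>]] Suc.prems(4,6)
      by simp
  qed
qed simp

lemma second_insertion_avoids_column:
  assumes path: "slide_path U r R e"
    and bumps: "\<forall>k. 1 \<le> k \<longrightarrow> k < r \<longrightarrow> row_bump U k (ys k) (ys (Suc k))"
  shows "(ins_step ^^ N) (RowIns W z k) = Done V (Some b) \<Longrightarrow> \<forall>p. k \<le> fst p \<longrightarrow> W p = U p \<Longrightarrow>
    1 \<le> k \<Longrightarrow> (k < r \<longrightarrow> ys k \<le> z) \<Longrightarrow> finite (dom W) \<Longrightarrow> snd b \<noteq> e R"
proof (induction N arbitrary: W z k)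
  case (Suc N)
  have WU: "W p = U p" if "k \<le> fst p" for p using Suc.prems(2) that by blast
  from Suc.prems(1,5) show ?case
  proof (cases rule: run_RowIns_cancellation_cases)
    case (cancel c)
    have Uc: "U (k,c) = Some (B0 k True)" using cancel(1) WU[of "(k,c)"] by simp
    show ?thesis
    proof (cases "k < r")
      case True
      then show ?thesis
        using row_bump_not_cancelled[of U k "ys k" "ys (Suc k)" c] Uc bumps Suc.prems(3,4) cancel(2)
        by blast
    next
      case False
      then have "k \<le> R \<longrightarrow> c < e k"
        using path Uc unfolding slide_path_def by (meson not_less)
      moreover have "U (k,0) = None" using path False unfolding slide_path_def by simp
      then have "1 \<le> c" using Uc by (cases c) auto
      moreover have "\<forall>p. (k,c) < p \<longrightarrow> (W((k,c) := None)) p = U p"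
        using WU by (auto simp: less_prod_def)
      ultimately show ?thesis
        using second_slide_avoids_path_end[OF path cancel(3)] Uc False by simp
    qed
  next
    case (bump w c)
    have next_row: "Suc k < r \<longrightarrow> ys (Suc k) \<le> w"
      using bumps Suc.prems(3,4) bump(1,2) WU[of "(k,c)"] unfolding row_bump_def
      by (metis Suc_lessD fst_conv le_refl order.strict_trans1)
    have agree: "\<forall>p. Suc k \<le> fst p \<longrightarrow> (W((k,c) := Some z)) p = U p" using WU by auto
    have fin: "finite (dom (W((k,c) := Some z)))" using Suc.prems(5) by simp
    show ?thesis using Suc.IH[OF bump(6) agree _ next_row fin] by simp
  qed
qed simp

theorem mainTheorem6:
  fixes m n :: nat and T U V :: tab and x1 x2 :: ent and b1 b2 :: "nat \<times> nat"
  assumes "0 < m" and "0 < n"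
    and "spo_tableau m n T"
    and "is_B0 x1" and "in_B m n x1" and "is_B0 x2" and "in_B m n x2"
    and "x1 \<le> x2"
    and "spo_row_insert T x1 U (Some b1)"
    and "spo_row_insert U x2 V (Some b2)"
  shows "snd b2 \<noteq> snd b1"
proof -
  obtain N1 where run1: "(ins_step ^^ N1) (RowIns T x1 1) = Done U (Some b1)"
    using assms(9) unfolding spo_row_insert_def by blast
  obtain N2 where run2: "(ins_step ^^ N2) (RowIns U x2 1) = Done V (Some b2)"
    using assms(10) unfolding spo_row_insert_def by blast
  have "B0 1 False \<le> x1" using assms(4,5)
    by (cases x1) (auto simp: less_eq_ent_def less_eq_prod_def)
  then obtain r ys e where "ys 1 = x1" "\<forall>k. 1 \<le> k \<longrightarrow> k < r \<longrightarrow> row_bump U k (ys k) (ys (Suc k))"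
      "slide_path U r (fst b1) e" "snd b1 = e (fst b1)"
    using first_insertion_trace[OF assms(3) run1] finite_dom_spo_tableau[OF assms(3)] by auto
  moreover have "finite (dom U)"
    using finite_dom_run[of "RowIns T x1 1" N1] finite_dom_spo_tableau[OF assms(3)] run1 by simp
  ultimately show ?thesis
    using second_insertion_avoids_column[of U r "fst b1" e ys, OF _ _ run2] assms(8) by simp
qed

end
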